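(* For every $\mathcal{L}_{A_m}^{\Box}$-formula $\varphi$: if $\varphi$ is derivable in the axiom system $\mathsf{K(A_m)}$, then $\varphi$ is $\mathsf{K(A)}$-valid.
   Context: $\mathcal{L}_{A_m}^{\Box}$-formulas are built from a countably infinite set $\mathrm{Var}$ of variables using binary $\to$ and unary $\Box$. Fix $p_0\in\mathrm{Var}$ and define $\overline{0}:=p_0\to p_0$, $\neg\varphi:=\varphi\to\overline{0}$, $\varphi\&\psi:=\neg\varphi\to\psi$, $0\varphi:=\overline{0}$, $(n+1)\varphi:=\varphi\&(n\varphi)$. A $\mathsf{K(A)}$-model $\langle W,R,V\rangle$: nonempty $W$, $R\subseteq W\times W$, $V\colon\mathrm{Var}\times W\to[-r,r]$ for some real $r\ge0$, extended by $V(\varphi\to\psi,x)=V(\psi,x)-V(\varphi,x)$ and $V(\Box\varphi,x)=\inf_{\mathbb{R}}\{V(\varphi,y):Rxy\}$ (empty infimum $=0$). $\varphi$ is $\mathsf{K(A)}$-valid if $V(\varphi,x)\ge0$ for all models and worlds. The axiom system $\mathsf{K(A_m)}$ has axiom schemas (B) $(\varphi\to\psi)\to((\psi\to\chi)\to(\varphi\to\chi))$; (C) $(\varphi\to(\psi\to\chi))\to(\psi\to(\varphi\to\chi))$; (I) $\varphi\to\varphi$; (A) $((\varphi\to\psi)\to\psi)\to\varphi$; (K) $\Box(\varphi\to\psi)\to(\Box\varphi\to\Box\psi)$; (D$_n$) $\Box(n\varphi)\to n\Box\varphi$ for $n\ge2$; and rules (mp) from $\varphi$ and $\varphi\to\psi$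 infer $\psi$; (nec) from $\varphi$ infer $\Box\varphi$; (con$_n$) from $n\varphi$ infer $\varphi$ for $n\ge2$. Derivations are finite sequences of formulas, each an axiom instance or obtained from earlier ones by a rule. *)

theory Defs
  imports Complex_Main
begin

datatype fm = Var nat | Imp fm fm (infixr "\<^bold>\<rightarrow>" 25) | Box fm

definition p0 :: nat where "p0 = 0"
definition Zero :: fm where "Zero = Imp (Var p0) (Var p0)"
definition Neg :: "fm \<Rightarrow> fm" where "Neg \<phi> = Imp \<phi> Zero"
definition Fus :: "fm \<Rightarrow> fm \<Rightarrow> fm" where "Fus \<phi> \<psi> = Imp (Neg \<phi>) \<psi>"

primrec mult :: "nat \<Rightarrow> fm \<Rightarrow> fm" where
  "mult 0 \<phi> = Zero"
| "mult (Suc n) \<phi> = Fus \<phi> (mult n \<phi>)"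

fun eval :: "('w \<Rightarrow> 'w \<Rightarrow> bool) \<Rightarrow> (nat \<Rightarrow> 'w \<Rightarrow> real) \<Rightarrow> fm \<Rightarrow> 'w \<Rightarrow> real" where
  "eval R V (Var p) x = V p x"
| "eval R V (Imp \<phi> \<psi>) x = eval R V \<psi> x - eval R V \<phi> x"
| "eval R V (Box \<phi>) x =
     (if {y. R x y} = {} then 0 else Inf {eval R V \<phi> y | y. R x y})"

definition is_model :: "'w set \<Rightarrow> ('w \<Rightarrow> 'w \<Rightarrow> bool) \<Rightarrow> (nat \<Rightarrow> 'w \<Rightarrow> real) \<Rightarrow> bool" where
  "is_model W R V \<longleftrightarrow> W \<noteq> {} \<and> (\<forall>x y. R x y \<longrightarrow> x \<in> W \<and> y \<in> W) \<and>
     (\<exists>r\<ge>0. \<forall>p. \<forall>x\<in>W. - r \<le> V p x \<and> V p x \<le> r)"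

text \<open>Validity relative to models whose worlds are drawn from the type 'w.
  The theorem quantifies over all types 'w, hence over all models.\<close>
definition KA_valid :: "'w itself \<Rightarrow> fm \<Rightarrow> bool" where
  "KA_valid _ \<phi> \<longleftrightarrow>
     (\<forall>(W::'w set) R V. is_model W R V \<longrightarrow> (\<forall>x\<in>W. eval R V \<phi> x \<ge> 0))"

inductive derivable :: "fm \<Rightarrow> bool" where
  ax_B: "derivable ((\<phi> \<^bold>\<rightarrow> \<psi>) \<^bold>\<rightarrow> ((\<psi> \<^bold>\<rightarrow> \<chi>) \<^bold>\<rightarrow> (\<phi> \<^bold>\<rightarrow> \<chi>)))"
| ax_C: "derivable ((\<phi> \<^bold>\<rightarrow> (\<psi> \<^bold>\<rightarrow> \<chi>)) \<^bold>\<rightarrow> (\<psi> \<^bold>\<rightarrow> (\<phi> \<^bold>\<rightarrow> \<chi>)))"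
| ax_I: "derivable (\<phi> \<^bold>\<rightarrow> \<phi>)"
| ax_A: "derivable (((\<phi> \<^bold>\<rightarrow> \<psi>) \<^bold>\<rightarrow> \<psi>) \<^bold>\<rightarrow> \<phi>)"
| ax_K: "derivable (Box (\<phi> \<^bold>\<rightarrow> \<psi>) \<^bold>\<rightarrow> (Box \<phi> \<^bold>\<rightarrow> Box \<psi>))"
| ax_D: "n \<ge> 2 \<Longrightarrow> derivable (Box (mult n \<phi>) \<^bold>\<rightarrow> mult n (Box \<phi>))"
| mp: "derivable \<phi> \<Longrightarrow> derivable (\<phi> \<^bold>\<rightarrow> \<psi>) \<Longrightarrow> derivable \<psi>"
| nec: "derivable \<phi> \<Longrightarrow> derivable (Box \<phi>)"
| con: "n \<ge> 2 \<Longrightarrow> derivable (mult n \<phi>) \<Longrightarrow> derivable \<phi>"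

end

theory Submission
  imports Defs
begin

text \<open>The propositional axioms evaluate to 0 identically,
  since implication is subtraction. For the modal principles, the box is an infimum over
  successors, and infima of reals are superadditive (axiom K) and commute with multiplication
  by a nonnegative constant (axioms D_n). These infima exist because a model bounds the
  variables, hence by induction every formula, uniformly on its worlds.\<close>

lemma cINF_add_ge:
  fixes f g :: "'a \<Rightarrow> real"
  assumes "S \<noteq> {}" "bdd_below (f ` S)" "bdd_below (g ` S)"
  shows "(INF y\<in>S. f y) + (INF y\<in>S. g y) \<le> (INF y\<in>S. f y + g y)"
  using assms by (intro cINF_greatest add_mono cINF_lower) auto

lemma cINF_mult_left:
  fixes f :: "'a \<Rightarrow> real"
  assumes "0 \<le> c" "S \<noteq> {}" "bdd_below (f ` S)"
  shows "(INF y\<in>S. c * f y) = c * (INF y\<in>S. f y)"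
proof -
  have "mono (\<lambda>t. c * t)"
    using \<open>0 \<le> c\<close> by (simp add: mono_def mult_left_mono)
  moreover have "continuous (at_right (INF y\<in>S. f y)) (\<lambda>t. c * t)"
    by (intro continuous_intros)
  ultimately have "c * (INF y\<in>S. f y) = Inf ((\<lambda>t. c * t) ` f ` S)"
    using assms by (intro continuous_at_Inf_mono) auto
  then show ?thesis
    by (simp add: image_image)
qed

lemma abs_cINF_le:
  fixes f :: "'a \<Rightarrow> real"
  assumes "S \<noteq> {}" "\<forall>y\<in>S. \<bar>f y\<bar> \<le> c"
  shows "\<bar>INF y\<in>S. f y\<bar> \<le> c"
proof -
  obtain y where "y \<in> S"
    using assms(1) by blast
  moreover have "bdd_below (f ` S)"
    using assms(2) by (intro bdd_belowI2[where m = "- c"]) (auto simp: abs_le_iff)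
  ultimately have "(INF y\<in>S. f y) \<le> f y"
    by (intro cINF_lower)
  moreover have "- c \<le> (INF y\<in>S. f y)"
    using assms by (intro cINF_greatest) (auto simp: abs_le_iff)
  ultimately show ?thesis
    using assms(2) \<open>y \<in> S\<close> by (auto simp: abs_le_iff)
qed

lemma eval_Zero [simp]: "eval R V Zero x = 0"
  by (simp add: Zero_def)

lemma eval_mult [simp]: "eval R V (mult n \<phi>) x = real n * eval R V \<phi> x"
  by (induction n) (simp_all add: Fus_def Neg_def algebra_simps)

lemma eval_Box_INF:
  assumes "{y. R x y} \<noteq> {}"
  shows "eval R V (Box \<phi>) x = (INF y\<in>{y. R x y}. eval R V \<phi> y)"
proof -
  have "{eval R V \<phi> y | y. R x y} = (\<lambda>y. eval R V \<phi> y) ` {y. R x y}"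
    by blast
  then show ?thesis
    unfolding eval.simps if_not_P[OF assms] by simp
qed

lemma eval_bounded:
  assumes "is_model W R V"
  shows "\<exists>c. \<forall>x\<in>W. \<bar>eval R V \<phi> x\<bar> \<le> c"
proof (induction \<phi>)
  case (Var p)
  from assms obtain r where "\<forall>x\<in>W. - r \<le> V p x \<and> V p x \<le> r"
    unfolding is_model_def by blast
  then have "\<forall>x\<in>W. \<bar>eval R V (Var p) x\<bar> \<le> r"
    by (auto simp: abs_le_iff)
  then show ?case ..
next
  case (Imp \<phi> \<psi>)
  then obtain c d where c: "\<forall>x\<in>W. \<bar>eval R V \<phi> x\<bar> \<le> c"
    and d: "\<forall>x\<in>W. \<bar>eval R V \<psi> x\<bar> \<le> d"
    by blast
  have "\<bar>eval R V (\<phi> \<^bold>\<rightarrow> \<psi>) x\<bar> \<le> c + d" if "x \<in> W" for x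
    using abs_triangle_ineq4[of "eval R V \<psi> x" "eval R V \<phi> x"] c d that by fastforce
  then show ?case
    by blast
next
  case (Box \<phi>)
  then obtain c where c: "\<forall>x\<in>W. \<bar>eval R V \<phi> x\<bar> \<le> c"
    by blast
  have "\<bar>eval R V (Box \<phi>) x\<bar> \<le> \<bar>c\<bar>" for x
  proof (cases "{y. R x y} = {}")
    case False
    have "\<forall>y\<in>{y. R x y}. \<bar>eval R V \<phi> y\<bar> \<le> c"
      using assms c unfolding is_model_def by blast
    then have "\<bar>eval R V (Box \<phi>) x\<bar> \<le> c"
      unfolding eval_Box_INF[of R x, OF False] using False by (rule abs_cINF_le[rotated])
    then show ?thesis
      by linarith
  qed simp
  then show ?case
    by blast
qed

lemma bdd_below_eval_successors:
  assumes "is_model W R V"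
  shows "bdd_below ((\<lambda>y. eval R V \<phi> y) ` {y. R x y})"
proof -
  obtain c where c: "\<forall>y\<in>W. \<bar>eval R V \<phi> y\<bar> \<le> c"
    using eval_bounded[OF assms] by blast
  have "R x y \<Longrightarrow> y \<in> W" for y
    using assms unfolding is_model_def by blast
  with c have "\<forall>y\<in>{y. R x y}. - c \<le> eval R V \<phi> y"
    by (fastforce simp: abs_le_iff)
  then show ?thesis
    by (intro bdd_belowI2[where m = "- c"]) auto
qed

lemma eval_ax_K_nonneg:
  assumes "is_model W R V"
  shows "0 \<le> eval R V (Box (\<phi> \<^bold>\<rightarrow> \<psi>) \<^bold>\<rightarrow> (Box \<phi> \<^bold>\<rightarrow> Box \<psi>)) x"
proof (cases "{y. R x y} = {}")
  case False
  have "(INF y\<in>{y. R x y}. eval R V (\<phi> \<^bold>\<rightarrow> \<psi>) y) + (INF y\<in>{y. R x y}. eval R V \<phi> y)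
      \<le> (INF y\<in>{y. R x y}. eval R V (\<phi> \<^bold>\<rightarrow> \<psi>) y + eval R V \<phi> y)"
    using False by (intro cINF_add_ge bdd_below_eval_successors[OF assms])
  then show ?thesis
    unfolding eval.simps(2) eval_Box_INF[of R x, OF False] by simp
qed simp

lemma eval_Box_mult:
  assumes "is_model W R V"
  shows "eval R V (Box (mult n \<phi>)) x = eval R V (mult n (Box \<phi>)) x"
proof (cases "{y. R x y} = {}")
  case False
  then show ?thesis
    using cINF_mult_left[OF _ False bdd_below_eval_successors[OF assms]]
    unfolding eval_mult eval_Box_INF[of R x, OF False] by simp
qed simp

lemma eval_Box_nonneg:
  assumes "\<And>y. R x y \<Longrightarrow> 0 \<le> eval R V \<phi> y"
  shows "0 \<le> eval R V (Box \<phi>) x"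
proof (cases "{y. R x y} = {}")
  case False
  then show ?thesis
    unfolding eval_Box_INF[of R x, OF False] using assms by (intro cINF_greatest) auto
qed simp

lemma derivable_eval_nonneg:
  assumes "derivable \<phi>" "is_model W R V"
  shows "0 \<le> eval R V \<phi> x"
  using assms(1)
proof (induction arbitrary: x rule: derivable.induct)
  case ax_K
  show ?case
    using assms(2) by (rule eval_ax_K_nonneg)
next
  case ax_D
  show ?case
    using eval_Box_mult[OF assms(2)] by simp
next
  case (mp \<phi> \<psi>)
  then show ?case
    by (metis eval.simps(2) diff_ge_0_iff_ge order_trans)
next
  case (nec \<phi>)
  then show ?case
    by (intro eval_Box_nonneg)
next
  case (con n \<phi>)
  then show ?case
    by (simp add: zero_le_mult_iff)
qed simp_all

theorem proposition4p1:
  fixes \<phi> :: fm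
  assumes "derivable \<phi>"
  shows "KA_valid TYPE('w) \<phi>"
  unfolding KA_valid_def by (simp add: derivable_eval_nonneg[OF assms])

end
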